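(* Let $(\mathcal{S},\mathcal{R})$ be an $r$-complete positive presentation. Then any two elements of $\mathrm{Mon}(\mathcal{S};\mathcal{R})$ admit a common right multiple if and only if the following condition holds: there exists a set $\mathcal{S}'$ with $\mathcal{S}\subseteq\mathcal{S}'\subseteq\mathcal{S}^*$ such that for all $u,v\in\mathcal{S}'$ there exist $u',v'\in\mathcal{S}'$ satisfying $(uv')^{-1}(vu')\curvearrowright_r\varepsilon$.
   Context: A positive presentation is a pair $(\mathcal{S},\mathcal{R})$ where $\mathcal{S}$ is a nonempty set of letters and $\mathcal{R}$ is a family of relations $u=v$, i.e. unordered pairs $\{u,v\}$ of nonempty words in the free monoid $\mathcal{S}^*$ (letters are regarded as length-one words). $\varepsilon$ denotes the empty word; $\equiv$ is the smallest congruence on $\mathcal{S}^*$ containing all pairs of $\mathcal{R}$, and $\mathrm{Mon}(\mathcal{S};\mathcal{R})=\mathcal{S}^*/{\equiv}$. An element $z$ is a common right multiple of $x,y$ if $z=xa=yb$ for some $a,b$. Let $\mathcal{S}^{-1}=\{s^{-1}:s\in\mathcal{S}\}$ be a disjoint copy of $\mathcal{S}$; for $u\in\mathcal{S}^*$, $u^{-1}$ is obtained by reversing the order of the letters of $u$ and replacing each $s$ by $s^{-1}$. Right reversing: for words $\mathbf{w},\mathbf{w}'$ on $\mathcal{S}\cup\mathcal{S}^{-1}$ we write $\mathbf{w}\curvearrowright_r\mathbf{w}'$ if $\mathbf{w}'$ is obtained from $\mathbf{w}$ by a finite (possibly empty) sequence of steps, each of which either deletes a subword $u^{-1}u$ with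 $u\in\mathcal{S}^*$ nonempty, or replaces a subword $u^{-1}v$ with $u,v\in\mathcal{S}^*$ nonempty by a word $v'u'^{-1}$ with $u',v'\in\mathcal{S}^*$ such that $uv'=vu'$ is a relation of $\mathcal{R}$. $(\mathcal{S},\mathcal{R})$ is $r$-complete if for all $u,v,u',v'\in\mathcal{S}^*$ with $uv'\equiv vu'$ there exist $u'',v'',w\in\mathcal{S}^*$ with $u^{-1}v\curvearrowright_r v''u''^{-1}$, $u'\equiv u''w$ and $v'\equiv v''w$. *)

theory Defs
  imports Main
begin

text \<open>Positive words are lists ('a list); S* is lists S.
  Relations R :: ('a list \<times> 'a list) set; a relation u = v is an unordered pair,
  so (u,v) \<in> R and (v,u) \<in> R are both read as the relation u = v.\<close>

definition positive_presentation :: "'a set \<Rightarrow> ('a list \<times> 'a list) set \<Rightarrow> bool" where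
  "positive_presentation S R \<longleftrightarrow> S \<noteq> {} \<and>
     (\<forall>(u,v)\<in>R. u \<in> lists S \<and> v \<in> lists S \<and> u \<noteq> [] \<and> v \<noteq> [])"

definition is_rel :: "('a list \<times> 'a list) set \<Rightarrow> 'a list \<Rightarrow> 'a list \<Rightarrow> bool" where
  "is_rel R u v \<longleftrightarrow> (u, v) \<in> R \<or> (v, u) \<in> R"

definition rel_step :: "('a list \<times> 'a list) set \<Rightarrow> 'a list \<Rightarrow> 'a list \<Rightarrow> bool" where
  "rel_step R w w' \<longleftrightarrow> (\<exists>x y l r. is_rel R l r \<and> w = x @ l @ y \<and> w' = x @ r @ y)"

text \<open>The congruence generated by R: the reflexive-transitive closure of the
  symmetric elementary steps (the smallest congruence containing R).\<close>
definition cong_R :: "('a list \<times> 'a list) set \<Rightarrow> 'a list \<Rightarrow> 'a list \<Rightarrow> bool" where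
  "cong_R R = (rel_step R)\<^sup>*\<^sup>*"

text \<open>Signed words: a letter (s, True) is s, a letter (s, False) is s^{-1}.\<close>
definition pos :: "'a list \<Rightarrow> ('a \<times> bool) list" where
  "pos u = map (\<lambda>s. (s, True)) u"

definition neg :: "'a list \<Rightarrow> ('a \<times> bool) list" where
  "neg u = rev (map (\<lambda>s. (s, False)) u)"

definition rrev_step :: "'a set \<Rightarrow> ('a list \<times> 'a list) set \<Rightarrow>
    ('a \<times> bool) list \<Rightarrow> ('a \<times> bool) list \<Rightarrow> bool" where
  "rrev_step S R w w' \<longleftrightarrow>
     (\<exists>x y u. u \<in> lists S \<and> u \<noteq> [] \<and> w = x @ neg u @ pos u @ y \<and> w' = x @ y) \<or>
     (\<exists>x y u v u' v'. u \<in> lists S \<and> v \<in> lists S \<and> u \<noteq> [] \<and> v \<noteq> [] \<and>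
        u' \<in> lists S \<and> v' \<in> lists S \<and> is_rel R (u @ v') (v @ u') \<and>
        w = x @ neg u @ pos v @ y \<and> w' = x @ pos v' @ neg u' @ y)"

definition rrev :: "'a set \<Rightarrow> ('a list \<times> 'a list) set \<Rightarrow>
    ('a \<times> bool) list \<Rightarrow> ('a \<times> bool) list \<Rightarrow> bool" where
  "rrev S R = (rrev_step S R)\<^sup>*\<^sup>*"

definition r_complete :: "'a set \<Rightarrow> ('a list \<times> 'a list) set \<Rightarrow> bool" where
  "r_complete S R \<longleftrightarrow>
     (\<forall>u\<in>lists S. \<forall>v\<in>lists S. \<forall>u'\<in>lists S. \<forall>v'\<in>lists S.
        cong_R R (u @ v') (v @ u') \<longrightarrow>
        (\<exists>u''\<in>lists S. \<exists>v''\<in>lists S. \<exists>w\<in>lists S.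
           rrev S R (neg u @ pos v) (pos v'' @ neg u'') \<and>
           cong_R R u' (u'' @ w) \<and> cong_R R v' (v'' @ w)))"

text \<open>Any two elements of Mon(S;R) = S*/cong admit a common right multiple:
  stated on representatives (every element is the class of a word in S*).\<close>
definition common_right_multiples :: "'a set \<Rightarrow> ('a list \<times> 'a list) set \<Rightarrow> bool" where
  "common_right_multiples S R \<longleftrightarrow>
     (\<forall>x\<in>lists S. \<forall>y\<in>lists S. \<exists>a\<in>lists S. \<exists>b\<in>lists S. cong_R R (x @ a) (y @ b))"

end

theory Submission
  imports Defs
begin

text \<open>Right reversing is sound: reading a signed word as a path in the Cayley graph of Mon(S;R),
  every reversing step keeps the endpoints of the paths it labels up to the congruence, so
  (u v')^-1 (v u') reversing to the empty word forces u v' = v u' in the monoid. Common right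
  multiples with cofactors in S' then propagate, by filling a grid, to all products of elements
  of S', hence to all of S*. Conversely, when common right multiples exist one can take S' = S*:
  r-completeness reverses u^-1 v to some v'' u''^-1, so (u v'')^-1 (v u'') = v''^-1 (u^-1 v) u''
  reverses to v''^-1 v'' u''^-1 u'' and then to the empty word.\<close>

lemma cong_R_refl [simp]: "cong_R R u u"
  by (simp add: cong_R_def)

lemma cong_R_trans [trans]: "cong_R R u v \<Longrightarrow> cong_R R v w \<Longrightarrow> cong_R R u w"
  unfolding cong_R_def by (rule rtranclp_trans)

lemma cong_R_sym [sym]:
  assumes "cong_R R u v"
  shows "cong_R R v u"
proof -
  have "symp (rel_step R)"
    by (auto simp: symp_def rel_step_def is_rel_def)
  with assms show ?thesis
    unfolding cong_R_def by (metis symp_rtranclp sympD)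
qed

lemma cong_R_if_is_rel:
  assumes "is_rel R u v"
  shows "cong_R R u v"
proof -
  have "rel_step R ([] @ u @ []) ([] @ v @ [])"
    unfolding rel_step_def using assms by blast
  then show ?thesis
    unfolding cong_R_def by simp
qed

lemma rel_step_context:
  assumes "rel_step R u v"
  shows "rel_step R (x @ u @ y) (x @ v @ y)"
proof -
  from assms obtain x' y' l r where "is_rel R l r" "u = x' @ l @ y'" "v = x' @ r @ y'"
    unfolding rel_step_def by blast
  then show ?thesis
    unfolding rel_step_def by (metis append.assoc)
qed

lemma cong_R_context: "cong_R R u v \<Longrightarrow> cong_R R (x @ u @ y) (x @ v @ y)"
  unfolding cong_R_def
  by (induction rule: rtranclp_induct) (auto intro: rtranclp.rtrancl_into_rtrancl rel_step_context)

lemma cong_R_append: "cong_R R u v \<Longrightarrow> cong_R R u' v' \<Longrightarrow> cong_R R (u @ u') (v @ v')"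
  using cong_R_context[of R u v "[]" u'] cong_R_context[of R u' v' v "[]"] cong_R_trans by force

lemma pos_append: "pos (u @ v) = pos u @ pos v"
  by (simp add: pos_def)

lemma neg_append: "neg (u @ v) = neg v @ neg u"
  by (simp add: neg_def)

lemma neg_snoc: "neg (u @ [s]) = (s, False) # neg u"
  by (simp add: neg_def)

text \<open>A signed word w moves p to q if it labels a path from p to q in the Cayley graph of
  Mon(S;R): a letter s leads from p to p s, and a letter s^-1 runs backwards along an s-edge.\<close>

fun moves_to :: "('a list \<times> 'a list) set \<Rightarrow> ('a \<times> bool) list \<Rightarrow> 'a list \<Rightarrow> 'a list \<Rightarrow> bool" where
  "moves_to R [] p q \<longleftrightarrow> cong_R R p q"
| "moves_to R ((s, True) # w) p q \<longleftrightarrow> moves_to R w (p @ [s]) q"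
| "moves_to R ((s, False) # w) p q \<longleftrightarrow> (\<exists>p'. cong_R R p (p' @ [s]) \<and> moves_to R w p' q)"

lemma moves_to_cong_start:
  "cong_R R p p' \<Longrightarrow> moves_to R w p q \<Longrightarrow> moves_to R w p' q"
proof (induction R w p q arbitrary: p' rule: moves_to.induct)
  case (1 R p q)
  then show ?case by (auto intro: cong_R_trans cong_R_sym)
next
  case (2 R s w p q)
  then have "cong_R R (p @ [s]) (p' @ [s])"
    by (simp add: cong_R_append)
  with 2 show ?case by simp
next
  case (3 R s w p q)
  then show ?case by simp (meson cong_R_sym cong_R_trans)
qed

lemma moves_to_append:
  "moves_to R (w @ w') p q \<longleftrightarrow> (\<exists>m. moves_to R w p m \<and> moves_to R w' m q)"
proof (induction w arbitrary: p)
  case Nil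
  then show ?case by (simp; meson cong_R_refl cong_R_sym moves_to_cong_start)
next
  case (Cons l w)
  then show ?case by (cases l; cases "snd l") auto
qed

lemma moves_to_pos: "moves_to R (pos u) p q \<longleftrightarrow> cong_R R (p @ u) q"
  by (induction u arbitrary: p) (auto simp: pos_def)

lemma moves_to_neg: "moves_to R (neg u) p q \<longleftrightarrow> cong_R R p (q @ u)"
proof (induction u arbitrary: p rule: rev_induct)
  case Nil
  then show ?case by (simp add: neg_def)
next
  case (snoc s u)
  have "cong_R R p (p' @ [s]) \<Longrightarrow> cong_R R p' (q @ u) \<Longrightarrow> cong_R R p (q @ u @ [s])" for p'
    by (metis append.assoc cong_R_append cong_R_refl cong_R_trans)
  with snoc show ?case
    by (auto simp: neg_snoc) (metis append.assoc cong_R_refl)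
qed

lemma moves_to_neg_pos:
  "moves_to R (neg u @ pos v) p q \<longleftrightarrow> (\<exists>r. cong_R R p (r @ u) \<and> cong_R R (r @ v) q)"
  by (simp add: moves_to_append moves_to_neg moves_to_pos)

lemma moves_to_pos_neg: "moves_to R (pos v @ neg u) p q \<longleftrightarrow> cong_R R (p @ v) (q @ u)"
  by (auto simp: moves_to_append moves_to_neg moves_to_pos intro: cong_R_trans)

lemma moves_to_context:
  assumes "\<And>p q. moves_to R w p q \<Longrightarrow> moves_to R w' p q"
    and "moves_to R (x @ w @ y) p q"
  shows "moves_to R (x @ w' @ y) p q"
  using assms by (auto simp: moves_to_append)

lemma moves_to_rrev_step:
  assumes "rrev_step S R w w'" and "moves_to R w p q"
  shows "moves_to R w' p q"
  using assms(1) unfolding rrev_step_def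
proof (elim disjE exE conjE)
  fix x y u
  assume w: "w = x @ neg u @ pos u @ y" and w': "w' = x @ y"
  have "moves_to R [] p' q'" if "moves_to R (neg u @ pos u) p' q'" for p' q'
    using that by (auto simp: moves_to_neg_pos intro: cong_R_trans)
  from moves_to_context[OF this, where x = x and y = y] assms(2) show "moves_to R w' p q"
    unfolding w w' by simp
next
  fix x y u v u' v'
  assume rel: "is_rel R (u @ v') (v @ u')"
    and w: "w = x @ neg u @ pos v @ y" and w': "w' = x @ pos v' @ neg u' @ y"
  have "moves_to R (pos v' @ neg u') p' q'" if "moves_to R (neg u @ pos v) p' q'" for p' q'
  proof -
    from that obtain r where r: "cong_R R p' (r @ u)" "cong_R R (r @ v) q'"
      by (auto simp: moves_to_neg_pos)
    have "cong_R R (p' @ v') (r @ u @ v')"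
      using cong_R_append[OF r(1) cong_R_refl] by simp
    also have "cong_R R \<dots> (r @ v @ u')"
      using cong_R_append[OF cong_R_refl cong_R_if_is_rel[OF rel]] .
    also have "cong_R R \<dots> (q' @ u')"
      using cong_R_append[OF r(2) cong_R_refl] by simp
    finally show ?thesis
      by (simp add: moves_to_pos_neg)
  qed
  from moves_to_context[OF this, where x = x and y = y] assms(2) show "moves_to R w' p q"
    unfolding w w' by simp
qed

lemma moves_to_rrev: "rrev S R w w' \<Longrightarrow> moves_to R w p q \<Longrightarrow> moves_to R w' p q"
  unfolding rrev_def
  by (induction rule: rtranclp_induct) (auto intro: moves_to_rrev_step)

lemma cong_R_if_rrev_Nil:
  assumes "rrev S R (neg u @ pos v) []"
  shows "cong_R R u v"
proof -
  have "moves_to R (neg u @ pos v) u v"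
    by (auto simp: moves_to_neg_pos intro: exI[of _ "[]"])
  from moves_to_rrev[OF assms this] show ?thesis
    by simp
qed

lemma rrev_trans [trans]: "rrev S R w w' \<Longrightarrow> rrev S R w' w'' \<Longrightarrow> rrev S R w w''"
  unfolding rrev_def by (rule rtranclp_trans)

lemma rrev_step_context:
  assumes "rrev_step S R w w'"
  shows "rrev_step S R (x @ w @ y) (x @ w' @ y)"
proof -
  from assms consider
      (cancel) x' y' u where "u \<in> lists S" "u \<noteq> []" "w = x' @ neg u @ pos u @ y'" "w' = x' @ y'"
    | (relation) x' y' u v u' v' where "u \<in> lists S" "v \<in> lists S" "u \<noteq> []" "v \<noteq> []"
        "u' \<in> lists S" "v' \<in> lists S" "is_rel R (u @ v') (v @ u')"
        "w = x' @ neg u @ pos v @ y'" "w' = x' @ pos v' @ neg u' @ y'"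
    unfolding rrev_step_def by blast
  then show ?thesis
  proof cases
    case cancel
    then have "x @ w @ y = (x @ x') @ neg u @ pos u @ (y' @ y)" "x @ w' @ y = (x @ x') @ (y' @ y)"
      by simp_all
    with cancel show ?thesis
      unfolding rrev_step_def by blast
  next
    case relation
    then have "x @ w @ y = (x @ x') @ neg u @ pos v @ (y' @ y)"
      "x @ w' @ y = (x @ x') @ pos v' @ neg u' @ (y' @ y)"
      by simp_all
    with relation show ?thesis
      unfolding rrev_step_def by blast
  qed
qed

lemma rrev_context: "rrev S R w w' \<Longrightarrow> rrev S R (x @ w @ y) (x @ w' @ y)"
  unfolding rrev_def
  by (induction rule: rtranclp_induct) (auto intro: rtranclp.rtrancl_into_rtrancl rrev_step_context)

lemma rrev_neg_pos_Nil:
  assumes "u \<in> lists S"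
  shows "rrev S R (neg u @ pos u) []"
proof (cases "u = []")
  case True
  then show ?thesis by (simp add: rrev_def neg_def pos_def)
next
  case False
  with assms have "rrev_step S R ([] @ neg u @ pos u @ []) ([] @ [])"
    unfolding rrev_step_def by (intro disjI1) blast
  then show ?thesis
    unfolding rrev_def by simp
qed

lemma rrev_Nil_if_common_multiple:
  assumes "r_complete S R" and u: "u \<in> lists S" and v: "v \<in> lists S"
    and "a \<in> lists S" "b \<in> lists S" "cong_R R (u @ a) (v @ b)"
  shows "\<exists>u'\<in>lists S. \<exists>v'\<in>lists S. rrev S R (neg (u @ v') @ pos (v @ u')) []"
proof -
  obtain u' v' where u': "u' \<in> lists S" and v': "v' \<in> lists S"
    and reverses: "rrev S R (neg u @ pos v) (pos v' @ neg u')"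
    using assms(1)[unfolded r_complete_def, rule_format, OF u v assms(5,4,6)] by blast
  have "rrev S R (neg (u @ v') @ pos (v @ u')) (neg v' @ (neg u @ pos v) @ pos u')"
    by (simp add: neg_append pos_append rrev_def)
  also have "rrev S R \<dots> (neg v' @ (pos v' @ neg u') @ pos u')"
    using rrev_context[OF reverses] .
  also have "rrev S R \<dots> ([] @ (neg u' @ pos u'))"
    using rrev_context[OF rrev_neg_pos_Nil[OF v'], where x = "[]" and y = "neg u' @ pos u'"] by simp
  also have "rrev S R \<dots> []"
    using rrev_neg_pos_Nil[OF u'] by simp
  finally show ?thesis
    using u' v' by blast
qed

definition common_multiples_in :: "('a list \<times> 'a list) set \<Rightarrow> 'a list set \<Rightarrow> bool" where
  "common_multiples_in R X \<longleftrightarrow> (\<forall>u\<in>X. \<forall>v\<in>X. \<exists>u'\<in>X. \<exists>v'\<in>X. cong_R R (u @ v') (v @ u'))"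

lemma common_right_multiples_iff: "common_right_multiples S R \<longleftrightarrow> common_multiples_in R (lists S)"
  unfolding common_right_multiples_def common_multiples_in_def by blast

lemma common_multiples_in_if_rrev_Nil:
  assumes "\<forall>u\<in>X. \<forall>v\<in>X. \<exists>u'\<in>X. \<exists>v'\<in>X. rrev S R (neg (u @ v') @ pos (v @ u')) []"
  shows "common_multiples_in R X"
  unfolding common_multiples_in_def
proof (intro ballI)
  fix u v
  assume "u \<in> X" "v \<in> X"
  with assms obtain u' v' where "u' \<in> X" "v' \<in> X" "rrev S R (neg (u @ v') @ pos (v @ u')) []"
    by blast
  then show "\<exists>u'\<in>X. \<exists>v'\<in>X. cong_R R (u @ v') (v @ u')"
    by (blast intro: cong_R_if_rrev_Nil)
qed

lemma common_multiple_concat_single: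
  assumes "common_multiples_in R X" and "xs \<in> lists X" "v \<in> X"
  shows "\<exists>xs'\<in>lists X. \<exists>v'\<in>X. cong_R R (concat xs @ v') (v @ concat xs')"
  using assms(2,3)
proof (induction xs arbitrary: v)
  case Nil
  have "cong_R R (concat [] @ v) (v @ concat [])"
    by simp
  with Nil show ?case by blast
next
  case (Cons u xs)
  obtain u' v' where "u' \<in> X" "v' \<in> X" and uv: "cong_R R (u @ v') (v @ u')"
    using assms(1) Cons.hyps(1) Cons.prems unfolding common_multiples_in_def by blast
  moreover obtain xs' v'' where xs': "xs' \<in> lists X" and "v'' \<in> X"
      and xs: "cong_R R (concat xs @ v'') (v' @ concat xs')"
    using Cons.IH[OF \<open>v' \<in> X\<close>] by blast
  moreover have "cong_R R (concat (u # xs) @ v'') (v @ concat (u' # xs'))"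
  proof -
    have "cong_R R (u @ concat xs @ v'') ((u @ v') @ concat xs')"
      using cong_R_append[OF cong_R_refl xs] by simp
    also have "cong_R R \<dots> ((v @ u') @ concat xs')"
      using cong_R_append[OF uv cong_R_refl] .
    finally show ?thesis by simp
  qed
  moreover have "u' # xs' \<in> lists X"
    using \<open>u' \<in> X\<close> xs' by simp
  ultimately show ?case
    using \<open>v'' \<in> X\<close> by (intro bexI[where x = "u' # xs'"] bexI[where x = v''])
qed

lemma common_multiples_in_concat:
  assumes "common_multiples_in R X"
  shows "common_multiples_in R (concat ` lists X)"
proof -
  have grid: "\<exists>xs'\<in>lists X. \<exists>ys'\<in>lists X. cong_R R (concat xs @ concat ys') (concat ys @ concat xs')"
    if "ys \<in> lists X" "xs \<in> lists X" for xs ys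
    using that
  proof (induction ys arbitrary: xs)
    case Nil
    have "cong_R R (concat xs @ concat []) (concat [] @ concat xs)"
      by simp
    with Nil show ?case by blast
  next
    case (Cons v ys)
    obtain xs' v' where "xs' \<in> lists X" and "v' \<in> X"
        and xs: "cong_R R (concat xs @ v') (v @ concat xs')"
      using common_multiple_concat_single[OF assms Cons.prems Cons.hyps(1)] by blast
    moreover obtain xs'' ys' where "xs'' \<in> lists X" and ys': "ys' \<in> lists X"
        and ys: "cong_R R (concat xs' @ concat ys') (concat ys @ concat xs'')"
      using Cons.IH[OF \<open>xs' \<in> lists X\<close>] by blast
    moreover have "cong_R R (concat xs @ concat (v' # ys')) (concat (v # ys) @ concat xs'')"
    proof -
      have "cong_R R ((concat xs @ v') @ concat ys') ((v @ concat xs') @ concat ys')"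
        using cong_R_append[OF xs cong_R_refl] .
      also have "cong_R R \<dots> (v @ concat ys @ concat xs'')"
        using cong_R_append[OF cong_R_refl ys] by simp
      finally show ?thesis by simp
    qed
    moreover have "v' # ys' \<in> lists X"
      using \<open>v' \<in> X\<close> ys' by simp
    ultimately show ?case
      by (intro bexI[where x = xs''] bexI[where x = "v' # ys'"])
  qed
  show ?thesis
    unfolding common_multiples_in_def
  proof (intro ballI)
    fix u v
    assume "u \<in> concat ` lists X" "v \<in> concat ` lists X"
    then obtain xs ys where xs: "xs \<in> lists X" and ys: "ys \<in> lists X"
        and uv: "u = concat xs" "v = concat ys"
      by blast
    obtain xs' ys' where "xs' \<in> lists X" "ys' \<in> lists X"
        and "cong_R R (concat xs @ concat ys') (concat ys @ concat xs')"
      using grid[OF ys xs] by blast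
    then show "\<exists>u'\<in>concat ` lists X. \<exists>v'\<in>concat ` lists X. cong_R R (u @ v') (v @ u')"
      unfolding uv by (intro bexI[where x = "concat xs'"] bexI[where x = "concat ys'"] imageI)
  qed
qed

lemma concat_lists_eq_lists:
  assumes "(\<lambda>s. [s]) ` S \<subseteq> X" and "X \<subseteq> lists S"
  shows "concat ` lists X = lists S"
proof
  have "concat xs \<in> lists S" if "xs \<in> lists X" for xs
    using that assms(2) by (induction xs) auto
  then show "concat ` lists X \<subseteq> lists S"
    by blast
  show "lists S \<subseteq> concat ` lists X"
  proof
    fix x
    assume "x \<in> lists S"
    then have "map (\<lambda>s. [s]) x \<in> lists X"
      using assms(1) by (auto simp: image_subset_iff)
    moreover have "x = concat (map (\<lambda>s. [s]) x)"
      by simp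
    ultimately show "x \<in> concat ` lists X"
      by (rule rev_image_eqI)
  qed
qed

theorem proposition6p6:
  fixes S :: "'a set" and R :: "('a list \<times> 'a list) set"
  assumes "positive_presentation S R"
    and "r_complete S R"
  shows "common_right_multiples S R \<longleftrightarrow>
    (\<exists>S'. (\<lambda>s. [s]) ` S \<subseteq> S' \<and> S' \<subseteq> lists S \<and>
       (\<forall>u\<in>S'. \<forall>v\<in>S'. \<exists>u'\<in>S'. \<exists>v'\<in>S'.
          rrev S R (neg (u @ v') @ pos (v @ u')) []))"
proof
  assume common: "common_right_multiples S R"
  have "\<exists>u'\<in>lists S. \<exists>v'\<in>lists S. rrev S R (neg (u @ v') @ pos (v @ u')) []"
    if u: "u \<in> lists S" and v: "v \<in> lists S" for u v
  proof -
    obtain a b where "a \<in> lists S" "b \<in> lists S" "cong_R R (u @ a) (v @ b)"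
      using common[unfolded common_right_multiples_def, rule_format, OF u v] by blast
    then show ?thesis
      by (rule rrev_Nil_if_common_multiple[OF assms(2) u v])
  qed
  then show "\<exists>S'. (\<lambda>s. [s]) ` S \<subseteq> S' \<and> S' \<subseteq> lists S \<and>
      (\<forall>u\<in>S'. \<forall>v\<in>S'. \<exists>u'\<in>S'. \<exists>v'\<in>S'. rrev S R (neg (u @ v') @ pos (v @ u')) [])"
    by (intro exI[of _ "lists S"] conjI ballI) auto
next
  assume "\<exists>S'. (\<lambda>s. [s]) ` S \<subseteq> S' \<and> S' \<subseteq> lists S \<and>
      (\<forall>u\<in>S'. \<forall>v\<in>S'. \<exists>u'\<in>S'. \<exists>v'\<in>S'. rrev S R (neg (u @ v') @ pos (v @ u')) [])"
  then obtain S' where "(\<lambda>s. [s]) ` S \<subseteq> S'" "S' \<subseteq> lists S"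
      and "\<forall>u\<in>S'. \<forall>v\<in>S'. \<exists>u'\<in>S'. \<exists>v'\<in>S'. rrev S R (neg (u @ v') @ pos (v @ u')) []"
    by blast
  then have "common_multiples_in R (concat ` lists S')"
    by (intro common_multiples_in_concat common_multiples_in_if_rrev_Nil)
  with concat_lists_eq_lists[OF \<open>(\<lambda>s. [s]) ` S \<subseteq> S'\<close> \<open>S' \<subseteq> lists S\<close>]
  show "common_right_multiples S R"
    by (simp add: common_right_multiples_iff)
qed

end
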